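(* Let $\mathfrak a$ be an $n$-dimensional real Euclidean vector space, $\Delta\subset\mathfrak a^*$ a reduced root system (i.e. $2\alpha\notin\Delta$ for $\alpha\in\Delta$) with positive system $\Delta^+$, and $m$ a Weyl-group-invariant multiplicity function on $\Delta$ with $m_\alpha\in2\mathbb N$ for all $\alpha\in\Delta$. With the notation $\lambda_\alpha$, $\rho$, $P^+$, $\mathbf c(m,\lambda)$ and $d(m,\mu)$ explained in the context, the following hold: (1) For all $\mu\in P^+$, $$d(m,\mu)=\frac{\mathbf c(m,-\rho)}{\mathbf c(m,\mu+\rho)\,\mathbf c(m,-(\mu+\rho))}.$$ (2) The function $\mu\mapsto d(m,\mu)$ on $P^+$ extends to a polynomial function on $\mathfrak a^*_{\mathbb C}$, namely $$d(m,\lambda)=\prod_{\alpha\in\Delta^+}\prod_{k=0}^{m_\alpha/2-1}\frac{k^2-(\lambda+\rho)_\alpha^2}{k^2-\rho_\alpha^2}.$$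
   Context: The inner product $\langle\cdot,\cdot\rangle$ of $\mathfrak a$ is transferred to $\mathfrak a^*$ and extended complex-bilinearly to $\mathfrak a^*_{\mathbb C}$. For $\lambda\in\mathfrak a^*_{\mathbb C}$ and $\alpha\in\Delta$ put $\lambda_\alpha:=\langle\lambda,\alpha\rangle/\langle\alpha,\alpha\rangle$. Let $\rho:=\frac12\sum_{\alpha\in\Delta^+}m_\alpha\alpha$ and $P^+:=\{\mu\in\mathfrak a^*:\mu_\alpha\in\mathbb Z_{\ge0}\text{ for all }\alpha\in\Delta^+\}$. The $\mathbf c$-function is $$\mathbf c(m,\lambda):=\Big(C\prod_{\alpha\in\Delta^+}\prod_{k=0}^{m_\alpha/2-1}(\lambda_\alpha+k)\Big)^{-1},\qquad C:=\prod_{\alpha\in\Delta^+}\prod_{k=0}^{m_\alpha/2-1}\frac1{\rho_\alpha+k},$$ a meromorphic function of $\lambda\in\mathfrak a^*_{\mathbb C}$. The Plancherel density is defined for $\mu\in P^+$ by Vretare's formula $$d(m,\mu):=\lim_{\varepsilon\to0}\frac{\mathbf c(m,-\rho+\varepsilon)}{\mathbf c(m,\mu+\rho)\,\mathbf c(m,-\mu-\rho+\varepsilon)},$$ with $\varepsilon\in\mathfrak a^*_{\mathbb C}$ tending to $0$. *)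

theory Defs
  imports "HOL-Analysis.Analysis"
begin

text \<open>The Euclidean space \<a> (identified with its dual via the inner product) is
  modelled as real^'n; its complexification \<a>*_C as complex^'n, with the
  inner product extended complex-bilinearly.\<close>

definition cvec :: "real^'n \<Rightarrow> complex^'n" where
  "cvec v = (\<chi> i. complex_of_real (v $ i))"

definition cinner :: "complex^'n \<Rightarrow> real^'n \<Rightarrow> complex" where
  "cinner l a = (\<Sum>i\<in>UNIV. l $ i * complex_of_real (a $ i))"

definition coroot_coord :: "complex^'n \<Rightarrow> real^'n \<Rightarrow> complex" where
  "coroot_coord l a = cinner l a / complex_of_real (a \<bullet> a)"

definition root_system :: "(real^'n) set \<Rightarrow> bool" where
  "root_system R \<longleftrightarrow> finite R \<and> 0 \<notin> R \<and> span R = UNIV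
     \<and> (\<forall>a\<in>R. \<forall>b\<in>R. b - (2 * (b \<bullet> a) / (a \<bullet> a)) *\<^sub>R a \<in> R)
     \<and> (\<forall>a\<in>R. \<forall>b\<in>R. 2 * (b \<bullet> a) / (a \<bullet> a) \<in> \<int>)"

definition reduced_root_system :: "(real^'n) set \<Rightarrow> bool" where
  "reduced_root_system R \<longleftrightarrow> root_system R \<and> (\<forall>a\<in>R. 2 *\<^sub>R a \<notin> R)"

definition positive_system :: "(real^'n) set \<Rightarrow> (real^'n) set \<Rightarrow> bool" where
  "positive_system R Rp \<longleftrightarrow>
     (\<exists>\<xi>. (\<forall>a\<in>R. a \<bullet> \<xi> \<noteq> 0) \<and> Rp = {a\<in>R. a \<bullet> \<xi> > 0})"

definition reflection :: "real^'n \<Rightarrow> real^'n \<Rightarrow> real^'n" where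
  "reflection a x = x - (2 * (x \<bullet> a) / (a \<bullet> a)) *\<^sub>R a"

inductive_set weyl_group :: "(real^'n) set \<Rightarrow> (real^'n \<Rightarrow> real^'n) set"
  for R :: "(real^'n) set" where
  id_in: "id \<in> weyl_group R"
| refl_comp: "w \<in> weyl_group R \<Longrightarrow> a \<in> R \<Longrightarrow> reflection a \<circ> w \<in> weyl_group R"

definition weyl_invariant :: "(real^'n) set \<Rightarrow> (real^'n \<Rightarrow> nat) \<Rightarrow> bool" where
  "weyl_invariant R m \<longleftrightarrow> (\<forall>w\<in>weyl_group R. \<forall>a\<in>R. m (w a) = m a)"

definition rho :: "(real^'n) set \<Rightarrow> (real^'n \<Rightarrow> nat) \<Rightarrow> real^'n" where
  "rho Rp m = (1/2) *\<^sub>R (\<Sum>a\<in>Rp. real (m a) *\<^sub>R a)"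

definition Pplus :: "(real^'n) set \<Rightarrow> (real^'n) set" where
  "Pplus Rp = {\<mu>. \<forall>a\<in>Rp. \<exists>k::nat. (\<mu> \<bullet> a) / (a \<bullet> a) = real k}"

definition cprod :: "(real^'n) set \<Rightarrow> (real^'n \<Rightarrow> nat) \<Rightarrow> complex^'n \<Rightarrow> complex" where
  "cprod Rp m l = (\<Prod>a\<in>Rp. \<Prod>k<m a div 2. coroot_coord l a + of_nat k)"

definition cconst :: "(real^'n) set \<Rightarrow> (real^'n \<Rightarrow> nat) \<Rightarrow> complex" where
  "cconst Rp m = (\<Prod>a\<in>Rp. \<Prod>k<m a div 2.
      1 / (coroot_coord (cvec (rho Rp m)) a + of_nat k))"

text \<open>The c-function (meromorphic; at its poles Isabelle's inverse gives 0,
  but these points are excluded in the limit defining d).\<close>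
definition cfun :: "(real^'n) set \<Rightarrow> (real^'n \<Rightarrow> nat) \<Rightarrow> complex^'n \<Rightarrow> complex" where
  "cfun Rp m l = inverse (cconst Rp m * cprod Rp m l)"

text \<open>Vretare's formula: limit as epsilon \<rightarrow> 0 in \<a>*_C, taken (as for meromorphic
  functions) over epsilon avoiding the poles of the c-functions involved.\<close>
definition plancherel :: "(real^'n) set \<Rightarrow> (real^'n \<Rightarrow> nat) \<Rightarrow> real^'n \<Rightarrow> complex" where
  "plancherel Rp m \<mu> =
     Lim (at 0 within {\<epsilon>. cprod Rp m (cvec (- rho Rp m) + \<epsilon>) \<noteq> 0
                          \<and> cprod Rp m (cvec (- \<mu> - rho Rp m) + \<epsilon>) \<noteq> 0})
       (\<lambda>\<epsilon>. cfun Rp m (cvec (- rho Rp m) + \<epsilon>) /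
             (cfun Rp m (cvec (\<mu> + rho Rp m)) * cfun Rp m (cvec (- \<mu> - rho Rp m) + \<epsilon>)))"

definition dpoly :: "(real^'n) set \<Rightarrow> (real^'n \<Rightarrow> nat) \<Rightarrow> complex^'n \<Rightarrow> complex" where
  "dpoly Rp m l = (\<Prod>a\<in>Rp. \<Prod>k<m a div 2.
      (of_nat k ^ 2 - (coroot_coord (l + cvec (rho Rp m)) a) ^ 2) /
      (of_nat k ^ 2 - (coroot_coord (cvec (rho Rp m)) a) ^ 2))"

end

theory Submission
  imports Defs
begin

text \<open>For a positive root \<open>\<alpha>\<close> one has \<open>\<rho>\<^sub>\<alpha> \<ge> m\<^sub>\<alpha>/2\<close>: in \<open>2\<langle>\<rho>,\<alpha>\<rangle> = \<Sum>\<^sub>\<beta> m\<^sub>\<beta>\<langle>\<beta>,\<alpha>\<rangle>\<close>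
  the positive roots that \<open>s\<^sub>\<alpha>\<close> keeps positive cancel in pairs, and the remaining ones,
  among them \<open>\<alpha>\<close> itself, all have \<open>\<langle>\<beta>,\<alpha>\<rangle> > 0\<close>. Consequently, for \<open>\<mu> \<in> P\<^sup>+\<close> every factor
  \<open>\<lambda>\<^sub>\<alpha> + k\<close> of the c-functions at \<open>\<plusminus>\<rho>\<close> and \<open>\<plusminus>(\<mu>+\<rho>)\<close> is nonzero, so Vretare's limit is
  just the value of a continuous function, and pairing \<open>(\<lambda>\<^sub>\<alpha> + k)(-\<lambda>\<^sub>\<alpha> + k) = k\<^sup>2 - \<lambda>\<^sub>\<alpha>\<^sup>2\<close>
  gives the polynomial.\<close>

lemma coroot_coord_cvec: "coroot_coord (cvec v) a = complex_of_real (v \<bullet> a / (a \<bullet> a))"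
  unfolding coroot_coord_def cinner_def cvec_def inner_vec_def by simp

lemma coroot_coord_uminus: "coroot_coord (- l) a = - coroot_coord l a"
  unfolding coroot_coord_def cinner_def by (simp add: sum_negf)

lemma cvec_add: "cvec (x + y) = cvec x + cvec y"
  unfolding cvec_def by (simp add: vec_eq_iff)

lemma cvec_uminus: "cvec (- x) = - cvec x"
  unfolding cvec_def by (simp add: vec_eq_iff)

lemma reflection_reflection: "a \<noteq> 0 \<Longrightarrow> reflection a (reflection a x) = x"
  unfolding reflection_def by (simp add: inner_diff_left algebra_simps)

lemma inner_reflection_root: "a \<noteq> 0 \<Longrightarrow> reflection a x \<bullet> a = - (x \<bullet> a)"
  unfolding reflection_def by (simp add: inner_diff_left algebra_simps)

lemma reflection_root: "a \<noteq> 0 \<Longrightarrow> reflection a a = - a"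
  unfolding reflection_def by (simp add: algebra_simps scaleR_2)

lemma weyl_invariant_reflection:
  assumes "weyl_invariant R m" and "a \<in> R" and "b \<in> R"
  shows "m (reflection a b) = m b"
proof -
  have "reflection a \<circ> id \<in> weyl_group R"
    using weyl_group.refl_comp[OF weyl_group.id_in \<open>a \<in> R\<close>] .
  with assms show ?thesis unfolding weyl_invariant_def by fastforce
qed

lemma positive_root_inner_pos_if_reflection_negative:
  assumes "root_system R" and "Rp = {a\<in>R. a \<bullet> \<xi> > 0}"
    and "\<alpha> \<in> Rp" and "\<beta> \<in> Rp" and "reflection \<alpha> \<beta> \<notin> Rp"
  shows "\<beta> \<bullet> \<alpha> > 0"
proof -
  have "reflection \<alpha> \<beta> \<in> R"
    using assms unfolding root_system_def reflection_def by blast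
  with assms have "\<beta> \<bullet> \<xi> - (2 * (\<beta> \<bullet> \<alpha>) / (\<alpha> \<bullet> \<alpha>)) * (\<alpha> \<bullet> \<xi>) \<le> 0"
    unfolding reflection_def by (auto simp: inner_diff_left)
  moreover have "\<beta> \<bullet> \<xi> > 0" and "\<alpha> \<bullet> \<xi> > 0" using assms by auto
  ultimately have "2 * (\<beta> \<bullet> \<alpha>) / (\<alpha> \<bullet> \<alpha>) > 0"
    by (smt (verit) mult_nonpos_nonneg)
  then show ?thesis using inner_ge_zero[of \<alpha>] by (auto simp: zero_less_divide_iff)
qed

lemma weighted_inner_sum_ge:
  assumes R: "root_system R" and "positive_system R Rp" and "weyl_invariant R m"
    and "\<alpha> \<in> Rp"
  shows "real (m \<alpha>) * (\<alpha> \<bullet> \<alpha>) \<le> (\<Sum>\<beta>\<in>Rp. real (m \<beta>) * (\<beta> \<bullet> \<alpha>))"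
proof -
  obtain \<xi> where Rp: "Rp = {a\<in>R. a \<bullet> \<xi> > 0}"
    using \<open>positive_system R Rp\<close> unfolding positive_system_def by blast
  have "finite Rp" using R Rp unfolding root_system_def by simp
  have "\<alpha> \<in> R" "\<alpha> \<noteq> 0" using \<open>\<alpha> \<in> Rp\<close> Rp by auto
  define s where "s = reflection \<alpha>"
  define h where "h \<beta> = real (m \<beta>) * (\<beta> \<bullet> \<alpha>)" for \<beta>
  define A where "A = {\<beta>\<in>Rp. s \<beta> \<in> Rp}"
  have "bij_betw s A A"
    unfolding A_def s_def using \<open>\<alpha> \<noteq> 0\<close>
    by (intro bij_betw_byWitness[where f' = "reflection \<alpha>"]) (auto simp: reflection_reflection)
  then have "sum h A = (\<Sum>\<beta>\<in>A. h (s \<beta>))" by (simp add: sum.reindex_bij_betw)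
  also have "\<dots> = - sum h A"
    unfolding sum_negf[symmetric] using \<open>\<alpha> \<in> R\<close> \<open>\<alpha> \<noteq> 0\<close>
    by (intro sum.cong) (auto simp: h_def A_def s_def Rp inner_reflection_root
                                     weyl_invariant_reflection[OF \<open>weyl_invariant R m\<close>])
  finally have "sum h A = 0" by simp
  have h_nonneg: "h \<beta> \<ge> 0" if "\<beta> \<in> Rp - A" for \<beta>
    using positive_root_inner_pos_if_reflection_negative[OF R Rp \<open>\<alpha> \<in> Rp\<close>, of \<beta>] that
    by (simp add: h_def A_def s_def)
  have "\<alpha> \<in> Rp - A"
    using \<open>\<alpha> \<in> Rp\<close> \<open>\<alpha> \<noteq> 0\<close> Rp by (auto simp: A_def s_def reflection_root)
  then have "h \<alpha> \<le> sum h (Rp - A)"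
    using \<open>finite Rp\<close> h_nonneg by (intro member_le_sum) auto
  also have "\<dots> = sum h Rp"
    using sum.subset_diff[of A Rp h] \<open>finite Rp\<close> \<open>sum h A = 0\<close> by (auto simp: A_def)
  finally show ?thesis by (simp add: h_def)
qed

lemma rho_coord_ge:
  assumes "root_system R" and "positive_system R Rp" and "weyl_invariant R m"
    and "\<alpha> \<in> Rp"
  shows "real (m \<alpha>) / 2 \<le> rho Rp m \<bullet> \<alpha> / (\<alpha> \<bullet> \<alpha>)"
proof -
  have "\<alpha> \<bullet> \<alpha> > 0"
    using assms(2,4) unfolding positive_system_def by auto
  moreover have "2 * (rho Rp m \<bullet> \<alpha>) = (\<Sum>\<beta>\<in>Rp. real (m \<beta>) * (\<beta> \<bullet> \<alpha>))"
    unfolding rho_def by (simp add: inner_sum_left)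
  ultimately show ?thesis
    using weighted_inner_sum_ge[OF assms] by (simp add: field_simps)
qed

lemma cprod_cvec_nonzero:
  assumes "finite Rp" and "\<And>a. a \<in> Rp \<Longrightarrow> real (m a) / 2 \<le> \<bar>v \<bullet> a / (a \<bullet> a)\<bar>"
  shows "cprod Rp m (cvec v) \<noteq> 0"
proof -
  have "v \<bullet> a / (a \<bullet> a) + real k \<noteq> 0" if "a \<in> Rp" "k < m a div 2" for a k
    using assms(2)[OF \<open>a \<in> Rp\<close>] that(2) by linarith
  then have "complex_of_real (v \<bullet> a / (a \<bullet> a)) + of_nat k \<noteq> 0" if "a \<in> Rp" "k < m a div 2" for a k
    using that by (metis of_real_add of_real_eq_0_iff of_real_of_nat_eq)
  then show ?thesis
    using \<open>finite Rp\<close> by (simp add: cprod_def coroot_coord_cvec)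
qed

lemma tendsto_cprod: "((\<lambda>\<epsilon>. cprod Rp m (l + \<epsilon>)) \<longlongrightarrow> cprod Rp m l) (at 0)"
proof -
  have "continuous_on UNIV (\<lambda>\<epsilon>. cprod Rp m (l + \<epsilon>))"
    unfolding cprod_def coroot_coord_def cinner_def divide_inverse by (intro continuous_intros)
  then have "isCont (\<lambda>\<epsilon>. cprod Rp m (l + \<epsilon>)) 0"
    by (simp add: continuous_on_eq_continuous_at)
  then show ?thesis by (simp add: isCont_def)
qed

lemma cfun_eq: "cfun Rp m l = cprod Rp m (cvec (rho Rp m)) / cprod Rp m l"
proof -
  have "cconst Rp m = inverse (cprod Rp m (cvec (rho Rp m)))"
    unfolding cconst_def cprod_def
    by (simp add: prod_inversef[symmetric, unfolded o_def] divide_inverse)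
  then show ?thesis
    unfolding cfun_def by (simp add: inverse_mult_distrib divide_inverse)
qed

lemma cfun_quotient_eq:
  assumes "cprod Rp m (cvec (rho Rp m)) \<noteq> 0"
  shows "cfun Rp m l / (cfun Rp m l' * cfun Rp m l'') =
           cprod Rp m l' * cprod Rp m l'' / (cprod Rp m (cvec (rho Rp m)) * cprod Rp m l)"
  using assms unfolding cfun_eq by (simp add: divide_inverse inverse_mult_distrib mult_ac)

lemma plancherel_eq_value:
  assumes "cprod Rp m (cvec (- rho Rp m)) \<noteq> 0"
    and "cprod Rp m (cvec (- \<mu> - rho Rp m)) \<noteq> 0"
    and "cfun Rp m (cvec (\<mu> + rho Rp m)) \<noteq> 0"
  shows "plancherel Rp m \<mu> = cfun Rp m (cvec (- rho Rp m)) /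
           (cfun Rp m (cvec (\<mu> + rho Rp m)) * cfun Rp m (cvec (- \<mu> - rho Rp m)))"
proof -
  define S where "S = {\<epsilon>. cprod Rp m (cvec (- rho Rp m) + \<epsilon>) \<noteq> 0
                          \<and> cprod Rp m (cvec (- \<mu> - rho Rp m) + \<epsilon>) \<noteq> 0}"
  have "open S"
    unfolding S_def Collect_conj_eq cprod_def coroot_coord_def cinner_def divide_inverse
    by (intro open_Int open_Collect_neq continuous_intros)
  moreover have "0 \<in> S" unfolding S_def using assms(1,2) by simp
  ultimately have "at 0 within S = at 0" by (rule at_within_open[rotated])
  moreover have "((\<lambda>\<epsilon>. cfun Rp m (cvec (- rho Rp m) + \<epsilon>) /
             (cfun Rp m (cvec (\<mu> + rho Rp m)) * cfun Rp m (cvec (- \<mu> - rho Rp m) + \<epsilon>)))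
      \<longlongrightarrow> cfun Rp m (cvec (- rho Rp m)) /
           (cfun Rp m (cvec (\<mu> + rho Rp m)) * cfun Rp m (cvec (- \<mu> - rho Rp m)))) (at 0)"
    using assms unfolding cfun_eq
    by (intro tendsto_intros tendsto_cprod) (auto simp: cfun_eq)
  ultimately show ?thesis
    unfolding plancherel_def S_def[symmetric] by (simp add: tendsto_Lim)
qed

lemma dpoly_eq_cprod:
  "dpoly Rp m l =
     cprod Rp m (l + cvec (rho Rp m)) * cprod Rp m (- (l + cvec (rho Rp m))) /
     (cprod Rp m (cvec (rho Rp m)) * cprod Rp m (- cvec (rho Rp m)))"
proof -
  have factor: "(of_nat k ^ 2 - y ^ 2) / (of_nat k ^ 2 - x ^ 2) =
        (y + of_nat k) * (- y + of_nat k) / ((x + of_nat k) * (- x + of_nat k))"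
    for x y :: complex and k :: nat
    by (simp add: power2_eq_square algebra_simps)
  show ?thesis
    unfolding dpoly_def factor cprod_def coroot_coord_uminus
      prod.distrib[symmetric] prod_dividef[symmetric] ..
qed

lemma Pplus_inner_nonneg:
  assumes "\<mu> \<in> Pplus Rp" and "a \<in> Rp"
  shows "0 \<le> \<mu> \<bullet> a"
proof -
  obtain k :: nat where "\<mu> \<bullet> a / (a \<bullet> a) = real k"
    using assms unfolding Pplus_def by blast
  then have "0 \<le> \<mu> \<bullet> a / (a \<bullet> a)" by simp
  show ?thesis
  proof (cases "a = 0")
    case False
    then have "a \<bullet> a > 0" by simp
    with \<open>0 \<le> \<mu> \<bullet> a / (a \<bullet> a)\<close> show ?thesis by (simp add: zero_le_divide_iff)
  qed simp
qed

lemma cprod_cvec_nonzero_dominant: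
  assumes "root_system R" and "positive_system R Rp" and "weyl_invariant R m"
    and "\<And>a. a \<in> Rp \<Longrightarrow> 0 \<le> \<mu> \<bullet> a"
  shows "cprod Rp m (cvec (\<mu> + rho Rp m)) \<noteq> 0"
    and "cprod Rp m (cvec (- (\<mu> + rho Rp m))) \<noteq> 0"
proof -
  have "finite Rp"
    using assms(1,2) unfolding root_system_def positive_system_def by auto
  have coord_ge: "real (m a) / 2 \<le> \<bar>(\<mu> + rho Rp m) \<bullet> a / (a \<bullet> a)\<bar>"
    and coord_ge_neg: "real (m a) / 2 \<le> \<bar>(- (\<mu> + rho Rp m)) \<bullet> a / (a \<bullet> a)\<bar>"
    if "a \<in> Rp" for a
  proof -
    have "(\<mu> + rho Rp m) \<bullet> a / (a \<bullet> a) = \<mu> \<bullet> a / (a \<bullet> a) + rho Rp m \<bullet> a / (a \<bullet> a)"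
      by (simp add: inner_add_left add_divide_distrib)
    moreover have "0 \<le> \<mu> \<bullet> a / (a \<bullet> a)" using assms(4)[OF that] by simp
    ultimately show "real (m a) / 2 \<le> \<bar>(\<mu> + rho Rp m) \<bullet> a / (a \<bullet> a)\<bar>"
      using rho_coord_ge[OF assms(1-3) that] by linarith
    then show "real (m a) / 2 \<le> \<bar>(- (\<mu> + rho Rp m)) \<bullet> a / (a \<bullet> a)\<bar>"
      by (simp only: inner_minus_left minus_divide_left abs_minus_cancel)
  qed
  show "cprod Rp m (cvec (\<mu> + rho Rp m)) \<noteq> 0"
    using \<open>finite Rp\<close> coord_ge by (rule cprod_cvec_nonzero)
  show "cprod Rp m (cvec (- (\<mu> + rho Rp m))) \<noteq> 0"
    using \<open>finite Rp\<close> coord_ge_neg by (rule cprod_cvec_nonzero)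
qed

theorem corollary1p3:
  fixes R Rp :: "(real^'n) set" and m :: "real^'n \<Rightarrow> nat"
  assumes "reduced_root_system R"
    and "positive_system R Rp"
    and "weyl_invariant R m"
    and "\<forall>a\<in>R. even (m a)"
  shows "(\<forall>\<mu>\<in>Pplus Rp. plancherel Rp m \<mu> =
            cfun Rp m (cvec (- rho Rp m)) /
            (cfun Rp m (cvec (\<mu> + rho Rp m)) * cfun Rp m (cvec (- (\<mu> + rho Rp m)))))
       \<and> (\<forall>\<mu>\<in>Pplus Rp. plancherel Rp m \<mu> = dpoly Rp m (cvec \<mu>))"
proof -
  have R: "root_system R" using assms(1) unfolding reduced_root_system_def by simp
  note nonzero = cprod_cvec_nonzero_dominant[OF R assms(2,3)]
  have rho_nonzero: "cprod Rp m (cvec (rho Rp m)) \<noteq> 0" "cprod Rp m (cvec (- rho Rp m)) \<noteq> 0"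
    using nonzero[of 0] by simp_all
  have "plancherel Rp m \<mu> =
          cfun Rp m (cvec (- rho Rp m)) /
          (cfun Rp m (cvec (\<mu> + rho Rp m)) * cfun Rp m (cvec (- (\<mu> + rho Rp m))))"
    (is "_ = ?quotient")
    and "plancherel Rp m \<mu> = dpoly Rp m (cvec \<mu>)" if "\<mu> \<in> Pplus Rp" for \<mu>
  proof -
    note mu_nonzero = nonzero[OF Pplus_inner_nonneg[OF that]]
    show "plancherel Rp m \<mu> = ?quotient"
      using plancherel_eq_value[of Rp m \<mu>] rho_nonzero mu_nonzero by (simp add: cfun_eq)
    also have "?quotient = dpoly Rp m (cvec \<mu>)"
      unfolding cfun_quotient_eq[OF rho_nonzero(1)]
        dpoly_eq_cprod[of Rp m "cvec \<mu>", folded cvec_add cvec_uminus] by (simp add: mult_ac)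
    finally show "plancherel Rp m \<mu> = dpoly Rp m (cvec \<mu>)" .
  qed
  then show ?thesis by blast
qed

end
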